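(* Let $A=\{a_0,a_1,\dots,a_{k-1}\}\subseteq\mathcal{C}_n$ with $a_0<a_1<\dots<a_{k-1}$, and let $\sigma=\sigma^{(n)}_k(A)$ be the corresponding $k$-simplex. Then (a) $\mathcal{DN}^{\,n-a_0-1}_0=\sigma\cap\mathcal{E}^{(a_0)}_{\mathcal{C}_n}$; (b) $\mathcal{DN}^{\,a_{k-1}}_{k-1}=\sigma\cap\mathcal{E}^{(a_{k-1})}_{\mathcal{C}_n}$.
   Context: $\mathcal{C}_n=\{0,1,\dots,n-1\}$ is the chain with its usual order; $\widehat{\mathcal{E}}_{\mathcal{C}_n}$ is the set of all order-preserving maps $\mathcal{C}_n\to\mathcal{C}_n$ (not required to fix $0$), a semiring under pointwise maximum and composition. The $k$-simplex $\sigma^{(n)}_k(A)$ is the set of all $\alpha\in\widehat{\mathcal{E}}_{\mathcal{C}_n}$ with $\mathrm{im}(\alpha)\subseteq A$. For $x\in\mathcal{C}_n$, $\overline{x}$ is the constant map with value $x$, and $\mathcal{E}^{(x)}_{\mathcal{C}_n}=\{\alpha\in\widehat{\mathcal{E}}_{\mathcal{C}_n}:\alpha(x)=x\}$. For $m\in\{0,\dots,k-1\}$ and $s\in\{0,\dots,n-1\}$, the $s$-th layer with respect to $\overline{a_m}$ is $\mathcal{L}^{s}_{a_m}=\{\alpha\in\sigma:\ |\{i\in\mathcal{C}_n:\alpha(i)=a_m\}|=s\}$. For an integer $t$ with $0\le t\le n$, the discrete neighborhood is $\mathcal{DN}^{\,t}_m=\{\overline{a_m}\}\cup\bigcup_{\ell=n-t}^{n-1}\mathcal{L}^{\ell}_{a_m}$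 (the union being empty when $t=0$). *)

theory Defs
  imports Main
begin

text \<open>Maps C_n -> C_n are represented as functions nat => nat that are
  extensional: value 0 outside {..<n}.\<close>

definition Ehat :: "nat \<Rightarrow> (nat \<Rightarrow> nat) set" where
  "Ehat n = {\<alpha>. (\<forall>i<n. \<alpha> i < n) \<and> (\<forall>i j. i \<le> j \<longrightarrow> j < n \<longrightarrow> \<alpha> i \<le> \<alpha> j)
              \<and> (\<forall>i. n \<le> i \<longrightarrow> \<alpha> i = 0)}"

definition simplex :: "nat \<Rightarrow> nat set \<Rightarrow> (nat \<Rightarrow> nat) set" where
  "simplex n A = {\<alpha> \<in> Ehat n. \<alpha> ` {..<n} \<subseteq> A}"

definition const_map :: "nat \<Rightarrow> nat \<Rightarrow> (nat \<Rightarrow> nat)" where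
  "const_map n x = (\<lambda>i. if i < n then x else 0)"

definition Efix :: "nat \<Rightarrow> nat \<Rightarrow> (nat \<Rightarrow> nat) set" where
  "Efix n x = {\<alpha> \<in> Ehat n. \<alpha> x = x}"

definition layer :: "nat \<Rightarrow> (nat \<Rightarrow> nat) set \<Rightarrow> nat \<Rightarrow> nat \<Rightarrow> (nat \<Rightarrow> nat) set" where
  "layer n \<sigma> x s = {\<alpha> \<in> \<sigma>. card {i. i < n \<and> \<alpha> i = x} = s}"

definition DN :: "nat \<Rightarrow> (nat \<Rightarrow> nat) set \<Rightarrow> nat \<Rightarrow> nat \<Rightarrow> (nat \<Rightarrow> nat) set" where
  "DN n \<sigma> x t = {const_map n x} \<union> (\<Union>l\<in>{n - t..<n}. layer n \<sigma> x l)"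

end

theory Submission
  imports Defs
begin

text \<open>A monotone map whose values are all at least \<open>x\<close> (resp. at most \<open>x\<close>) has as
  fibre over \<open>x\<close> an initial (resp. final) segment of the chain. It fixes \<open>x\<close> exactly
  when that segment reaches \<open>x\<close>, i.e. when the fibre has at least \<open>x + 1\<close>
  (resp. \<open>n - x\<close>) elements. For the minimum and maximum of \<open>A\<close> this is precisely the
  condition of lying in the corresponding layers of the discrete neighbourhood, and the
  only map with a full fibre is the constant one.\<close>

lemma card_fiber_le: "card {i. i < n \<and> (\<alpha> :: nat \<Rightarrow> nat) i = x} \<le> n"
  using card_mono[of "{..<n}" "{i. i < n \<and> \<alpha> i = x}"] by auto

lemma eq_const_map_if_card_fiber_ge:
  assumes "\<alpha> \<in> Ehat n" and "n \<le> card {i. i < n \<and> \<alpha> i = x}"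
  shows "\<alpha> = const_map n x"
proof -
  have "{i. i < n \<and> \<alpha> i = x} = {..<n}"
    using assms(2) card_fiber_le[of n \<alpha> x] by (intro card_subset_eq) auto
  then show ?thesis
    using assms(1) by (auto simp: Ehat_def const_map_def fun_eq_iff)
qed

lemma const_map_in_simplex_Efix:
  assumes "x < n" and "x \<in> A"
  shows "const_map n x \<in> simplex n A \<inter> Efix n x"
  using assms by (auto simp: simplex_def Ehat_def Efix_def const_map_def)

lemma simplex_value_in:
  assumes "\<alpha> \<in> simplex n A" and "i < n"
  shows "\<alpha> i \<in> A"
  using assms by (auto simp: simplex_def)

lemma DN_eq_simplex_Efix_if_card_fiber:
  assumes "x < n" and "x \<in> A"
    and fix_iff: "\<And>\<alpha>. \<alpha> \<in> simplex n A \<Longrightarrow> \<alpha> x = x \<longleftrightarrow> n - t \<le> card {i. i < n \<and> \<alpha> i = x}"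
  shows "DN n (simplex n A) x t = simplex n A \<inter> Efix n x"
proof (intro equalityI subsetI)
  fix \<alpha> assume "\<alpha> \<in> DN n (simplex n A) x t"
  then consider "\<alpha> = const_map n x"
    | "\<alpha> \<in> simplex n A" "n - t \<le> card {i. i < n \<and> \<alpha> i = x}"
    by (auto simp: DN_def layer_def)
  then show "\<alpha> \<in> simplex n A \<inter> Efix n x"
    using const_map_in_simplex_Efix[OF assms(1,2)] fix_iff
    by cases (auto simp: Efix_def simplex_def)
next
  fix \<alpha> assume \<alpha>: "\<alpha> \<in> simplex n A \<inter> Efix n x"
  then have "n - t \<le> card {i. i < n \<and> \<alpha> i = x}"
    using fix_iff by (auto simp: Efix_def)
  moreover have "\<alpha> = const_map n x" if "n \<le> card {i. i < n \<and> \<alpha> i = x}"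
    using eq_const_map_if_card_fiber_ge \<alpha> that by (auto simp: simplex_def)
  ultimately show "\<alpha> \<in> DN n (simplex n A) x t"
    using \<alpha> by (force simp: DN_def layer_def)
qed

lemma Ehat_mono:
  assumes "\<alpha> \<in> Ehat n" and "i \<le> j" and "j < n"
  shows "\<alpha> i \<le> \<alpha> j"
  using assms by (simp add: Ehat_def)

lemma fixes_lower_bound_iff_card_fiber:
  assumes \<alpha>: "\<alpha> \<in> Ehat n" and "x < n" and lower: "\<And>i. i < n \<Longrightarrow> x \<le> \<alpha> i"
  shows "\<alpha> x = x \<longleftrightarrow> x + 1 \<le> card {i. i < n \<and> \<alpha> i = x}"
proof
  assume fixed: "\<alpha> x = x"
  have "\<alpha> i = x" if "i \<le> x" for i
    using Ehat_mono[OF \<alpha> that \<open>x < n\<close>] lower[of i] that \<open>x < n\<close> fixed by simp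
  then have "{..x} \<subseteq> {i. i < n \<and> \<alpha> i = x}"
    using \<open>x < n\<close> by auto
  then show "x + 1 \<le> card {i. i < n \<and> \<alpha> i = x}"
    using card_mono[of "{i. i < n \<and> \<alpha> i = x}" "{..x}"] by simp
next
  assume "x + 1 \<le> card {i. i < n \<and> \<alpha> i = x}"
  then have "\<not> {i. i < n \<and> \<alpha> i = x} \<subseteq> {..<x}"
    using card_mono[of "{..<x}" "{i. i < n \<and> \<alpha> i = x}"] by auto
  then obtain i where "i \<in> {i. i < n \<and> \<alpha> i = x}" "i \<notin> {..<x}"
    by blast
  then show "\<alpha> x = x"
    using Ehat_mono[OF \<alpha>, of x i] lower[OF \<open>x < n\<close>] by simp
qed

lemma fixes_upper_bound_iff_card_fiber:
  assumes \<alpha>: "\<alpha> \<in> Ehat n" and "x < n" and upper: "\<And>i. i < n \<Longrightarrow> \<alpha> i \<le> x"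
  shows "\<alpha> x = x \<longleftrightarrow> n - x \<le> card {i. i < n \<and> \<alpha> i = x}"
proof
  assume fixed: "\<alpha> x = x"
  have "\<alpha> i = x" if "x \<le> i" "i < n" for i
    using Ehat_mono[OF \<alpha> that] upper[of i] that fixed by simp
  then have "{x..<n} \<subseteq> {i. i < n \<and> \<alpha> i = x}"
    by auto
  then show "n - x \<le> card {i. i < n \<and> \<alpha> i = x}"
    using card_mono[of "{i. i < n \<and> \<alpha> i = x}" "{x..<n}"] by simp
next
  assume "n - x \<le> card {i. i < n \<and> \<alpha> i = x}"
  then have "\<not> {i. i < n \<and> \<alpha> i = x} \<subseteq> {Suc x..<n}"
    using card_mono[of "{Suc x..<n}" "{i. i < n \<and> \<alpha> i = x}"] \<open>x < n\<close> by auto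
  then obtain i where "\<alpha> i = x" "i \<le> x"
    by (auto simp: subset_iff not_less_eq_eq)
  then show "\<alpha> x = x"
    using Ehat_mono[OF \<alpha> _ \<open>x < n\<close>, of i] upper[OF \<open>x < n\<close>] by simp
qed

lemma DN_simplex_min:
  assumes "x < n" and "x \<in> A" and "\<And>y. y \<in> A \<Longrightarrow> x \<le> y"
  shows "DN n (simplex n A) x (n - x - 1) = simplex n A \<inter> Efix n x"
proof (rule DN_eq_simplex_Efix_if_card_fiber[OF assms(1,2)])
  fix \<alpha> assume "\<alpha> \<in> simplex n A"
  then have "\<alpha> x = x \<longleftrightarrow> x + 1 \<le> card {i. i < n \<and> \<alpha> i = x}"
    using assms simplex_value_in
    by (intro fixes_lower_bound_iff_card_fiber) (auto simp: simplex_def)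
  moreover have "n - (n - x - 1) = x + 1"
    using \<open>x < n\<close> by simp
  ultimately show "\<alpha> x = x \<longleftrightarrow> n - (n - x - 1) \<le> card {i. i < n \<and> \<alpha> i = x}"
    by simp
qed

lemma DN_simplex_max:
  assumes "x < n" and "x \<in> A" and "\<And>y. y \<in> A \<Longrightarrow> y \<le> x"
  shows "DN n (simplex n A) x x = simplex n A \<inter> Efix n x"
proof (rule DN_eq_simplex_Efix_if_card_fiber[OF assms(1,2)])
  fix \<alpha> assume "\<alpha> \<in> simplex n A"
  then show "\<alpha> x = x \<longleftrightarrow> n - x \<le> card {i. i < n \<and> \<alpha> i = x}"
    using assms simplex_value_in
    by (intro fixes_upper_bound_iff_card_fiber) (auto simp: simplex_def)
qed

theorem theorem5:
  fixes n k :: nat and a :: "nat \<Rightarrow> nat"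
  assumes "k \<ge> 1"
    and "\<And>i j. i < j \<Longrightarrow> j < k \<Longrightarrow> a i < a j"
    and "\<And>i. i < k \<Longrightarrow> a i < n"
  defines "A \<equiv> a ` {..<k}"
  defines "\<sigma> \<equiv> simplex n A"
  shows "DN n \<sigma> (a 0) (n - a 0 - 1) = \<sigma> \<inter> Efix n (a 0)
         \<and> DN n \<sigma> (a (k - 1)) (a (k - 1)) = \<sigma> \<inter> Efix n (a (k - 1))"
proof -
  have mono: "a i \<le> a j" if "i \<le> j" "j < k" for i j
    using assms(2) that by (cases "i = j") (auto intro: less_imp_le)
  have bounds: "a 0 \<le> y \<and> y \<le> a (k - 1)" if "y \<in> A" for y
    using that mono by (auto simp: A_def)
  have "a 0 \<in> A" "a (k - 1) \<in> A" "a 0 < n" "a (k - 1) < n"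
    using assms(1,3) by (auto simp: A_def)
  then show ?thesis
    unfolding \<sigma>_def using bounds DN_simplex_min DN_simplex_max by simp
qed

end
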